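(* Let $\mathbf{T}\in\{0,1\}^{n\times\ell}$ be a matrix all of whose columns are dirty, with $\delta(\mathbf{T})\le 3$. If $\mathcal{T}_3\ne\emptyset$, then $\ell\le|\mathcal{T}_2|+|\mathcal{T}_3|+2$.
   Context: A column of a binary matrix is dirty if it contains both $0$ and $1$. For rows $u,w\in\{0,1\}^\ell$, $D(u,w)=\{j\in[\ell]:u[j]\ne w[j]\}$ and $d(u,w)=|D(u,w)|$; $\delta(\mathbf{T})=\max_{i\ne i'}d(\mathbf{T}[i],\mathbf{T}[i'])$ where $\mathbf{T}[i]$ is the $i$-th row. For $x\in\mathbb{N}$, $\mathcal{T}_x$ is the set system (without duplicates) $\{D(\mathbf{T}[i],\mathbf{T}[n]): i\in[n-1],\ d(\mathbf{T}[i],\mathbf{T}[n])=x\}$. *)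

theory Defs
  imports Main
begin

(* A binary n x l matrix is modelled as T :: nat => nat => bool, with rows indexed by
   {1..n}, columns by {1..l}; True = 1, False = 0. Entries outside the index ranges are ignored. *)

definition dirty :: "(nat \<Rightarrow> nat \<Rightarrow> bool) \<Rightarrow> nat \<Rightarrow> nat \<Rightarrow> bool" where
  "dirty T n j \<longleftrightarrow> (\<exists>i\<in>{1..n}. T i j) \<and> (\<exists>i\<in>{1..n}. \<not> T i j)"

definition Dset :: "(nat \<Rightarrow> nat \<Rightarrow> bool) \<Rightarrow> nat \<Rightarrow> nat \<Rightarrow> nat \<Rightarrow> nat set" where
  "Dset T l i i' = {j \<in> {1..l}. T i j \<noteq> T i' j}"

definition dH :: "(nat \<Rightarrow> nat \<Rightarrow> bool) \<Rightarrow> nat \<Rightarrow> nat \<Rightarrow> nat \<Rightarrow> nat" where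
  "dH T l i i' = card (Dset T l i i')"

(* delta(T) = max over distinct rows; convention 0 when there are fewer than 2 rows *)
definition delta :: "(nat \<Rightarrow> nat \<Rightarrow> bool) \<Rightarrow> nat \<Rightarrow> nat \<Rightarrow> nat" where
  "delta T n l = Max ({dH T l i i' | i i'. i \<in> {1..n} \<and> i' \<in> {1..n} \<and> i \<noteq> i'} \<union> {0})"

definition Tfam :: "(nat \<Rightarrow> nat \<Rightarrow> bool) \<Rightarrow> nat \<Rightarrow> nat \<Rightarrow> nat \<Rightarrow> nat set set" where
  "Tfam T n l x = {Dset T l i n | i. i \<in> {1..n-1} \<and> dH T l i n = x}"

end

theory Submission
  imports Defs
begin

(* Let S_i = D(T[i], T[n]) for i < n. Since D(T[i], T[i']) is the symmetric difference of
   S_i and S_i', all S_i have at most 3 elements and lie at symmetric distance at most 3 from a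
   fixed 3-set A = S_a. Such a set S_i sticks out of A by at most half its size: by at most one
   column, and by none if it is a singleton. Dirtiness means every column lies in some S_i, so the
   columns are covered by A together with one column for each S_i of size 2 or 3 other than A. *)

lemma twice_card_diff_le_if_card_sym_diff_le:
  assumes "finite A" "finite B" "card (sym_diff A B) \<le> card A"
  shows "2 * card (B - A) \<le> card B"
proof -
  have "card (sym_diff A B) = card (A - B) + card (B - A)"
    using assms(1,2) by (intro card_Un_disjoint) auto
  moreover have "card A = card (A \<inter> B) + card (A - B)"
    using assms(1) by (metis Int_Diff_disjoint Int_Diff_Un card_Un_disjoint finite_Diff finite_Int)
  moreover have "card B = card (A \<inter> B) + card (B - A)"
    using assms(2) by (metis Int_Diff_disjoint Int_Diff_Un Int_commute card_Un_disjoint finite_Diff finite_Int)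
  ultimately show ?thesis using assms(3) by linarith
qed

lemma card_Union_le_if_close_to_member:
  fixes F :: "'a set set"
  assumes "finite F" "\<forall>B\<in>F. finite B" "A \<in> F"
    and "\<forall>B\<in>F. card B \<le> card A \<and> card (sym_diff A B) \<le> card A"
  shows "card (\<Union>F) \<le> card A + card A div 2 * card ({B \<in> F. 2 \<le> card B} - {A})"
proof -
  define G where "G = {B \<in> F. 2 \<le> card B} - {A}"
  have finite_G: "finite G" unfolding G_def using assms(1) by simp
  have diff_bound: "2 * card (B - A) \<le> card B" if "B \<in> F" for B
    using assms(2-4) that by (intro twice_card_diff_le_if_card_sym_diff_le) auto
  have "\<Union>F \<subseteq> A \<union> (\<Union>B\<in>G. B - A)"
  proof
    fix x assume "x \<in> \<Union>F"
    then obtain B where B: "B \<in> F" "x \<in> B" by blast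
    show "x \<in> A \<union> (\<Union>B\<in>G. B - A)"
    proof (cases "2 \<le> card B")
      case False
      then have "card (B - A) = 0" using diff_bound[OF B(1)] by linarith
      then have "B - A = {}" using assms(2) B(1) by simp
      then show ?thesis using B(2) by blast
    qed (use B in \<open>auto simp: G_def\<close>)
  qed
  moreover have "finite (A \<union> (\<Union>B\<in>G. B - A))"
    using assms(2,3) finite_G unfolding G_def by auto
  ultimately have "card (\<Union>F) \<le> card (A \<union> (\<Union>B\<in>G. B - A))"
    by (rule card_mono[rotated])
  also have "\<dots> \<le> card A + (\<Sum>B\<in>G. card (B - A))"
    using card_Un_le[of A "\<Union>B\<in>G. B - A"] card_UN_le[OF finite_G, of "\<lambda>B. B - A"] by linarith
  also have "(\<Sum>B\<in>G. card (B - A)) \<le> (\<Sum>B\<in>G. card A div 2)"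
  proof (rule sum_mono)
    fix B assume "B \<in> G"
    then have "B \<in> F" unfolding G_def by blast
    then have "2 * card (B - A) \<le> card A" using diff_bound assms(4) le_trans by blast
    then show "card (B - A) \<le> card A div 2" by linarith
  qed
  finally show ?thesis unfolding G_def by (simp add: mult.commute)
qed

definition last_row_diffs :: "(nat \<Rightarrow> nat \<Rightarrow> bool) \<Rightarrow> nat \<Rightarrow> nat \<Rightarrow> nat set set" where
  "last_row_diffs T n l = {Dset T l i n | i. i \<in> {1..n-1}}"

lemma Tfam_eq_card_last_row_diffs: "Tfam T n l x = {B \<in> last_row_diffs T n l. card B = x}"
  unfolding Tfam_def last_row_diffs_def dH_def by auto

lemma last_row_diffs_subset_Pow: "last_row_diffs T n l \<subseteq> Pow {1..l}"
  unfolding last_row_diffs_def Dset_def by auto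

lemma finite_last_row_diffs: "finite (last_row_diffs T n l)"
  using last_row_diffs_subset_Pow by (rule finite_subset) simp

lemma finite_mem_last_row_diffs: "B \<in> last_row_diffs T n l \<Longrightarrow> finite B"
  unfolding last_row_diffs_def Dset_def by auto

lemma finite_Tfam: "finite (Tfam T n l x)"
  using finite_last_row_diffs by (simp add: Tfam_eq_card_last_row_diffs)

lemma card_Un_Tfam:
  assumes "x \<noteq> y"
  shows "card (Tfam T n l x \<union> Tfam T n l y) = card (Tfam T n l x) + card (Tfam T n l y)"
  using assms by (intro card_Un_disjoint finite_Tfam) (auto simp: Tfam_eq_card_last_row_diffs)

lemma large_last_row_diffs_eq_Tfam:
  assumes "\<forall>B\<in>last_row_diffs T n l. card B \<le> 3"
  shows "{B \<in> last_row_diffs T n l. 2 \<le> card B} = Tfam T n l 2 \<union> Tfam T n l 3"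
proof -
  have "2 \<le> card B \<longleftrightarrow> card B = 2 \<or> card B = 3" if "B \<in> last_row_diffs T n l" for B
    using assms that by force
  then show ?thesis by (auto simp: Tfam_eq_card_last_row_diffs)
qed

lemma Dset_eq_sym_diff: "Dset T l i i' = sym_diff (Dset T l i k) (Dset T l i' k)"
  unfolding Dset_def by auto

lemma dH_le_delta:
  assumes "i \<in> {1..n}" "i' \<in> {1..n}" "i \<noteq> i'"
  shows "dH T l i i' \<le> delta T n l"
proof -
  let ?D = "{dH T l i i' | i i'. i \<in> {1..n} \<and> i' \<in> {1..n} \<and> i \<noteq> i'}"
  have "?D \<subseteq> (\<lambda>(i, i'). dH T l i i') ` ({1..n} \<times> {1..n})"
    by auto
  then have "finite (?D \<union> {0})"
    by (simp add: finite_subset)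
  moreover have "dH T l i i' \<in> ?D \<union> {0}"
    using assms by blast
  ultimately show ?thesis unfolding delta_def by (rule Max_ge)
qed

lemma card_last_row_diffs_le_delta:
  assumes "B \<in> last_row_diffs T n l"
  shows "card B \<le> delta T n l"
  using assms dH_le_delta[of _ n n T l] unfolding last_row_diffs_def dH_def by fastforce

lemma card_sym_diff_last_row_diffs_le_delta:
  assumes "A \<in> last_row_diffs T n l" "B \<in> last_row_diffs T n l"
  shows "card (sym_diff A B) \<le> delta T n l"
proof -
  obtain i i' where "i \<in> {1..n-1}" "i' \<in> {1..n-1}" "A = Dset T l i n" "B = Dset T l i' n"
    using assms unfolding last_row_diffs_def by blast
  then show ?thesis
    using dH_le_delta[of i n i' T l] Dset_eq_sym_diff[of T l i i' n]
    by (cases "i = i'") (auto simp: dH_def)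
qed

lemma dirty_columns_subset_Union_last_row_diffs:
  assumes "\<forall>j\<in>{1..l}. dirty T n j"
  shows "{1..l} \<subseteq> \<Union>(last_row_diffs T n l)"
proof
  fix j assume "j \<in> {1..l}"
  then obtain i where "i \<in> {1..n}" "T i j \<noteq> T n j"
    using assms unfolding dirty_def by blast
  moreover have "i \<noteq> n" using \<open>T i j \<noteq> T n j\<close> by blast
  ultimately have "i \<in> {1..n-1}" "j \<in> Dset T l i n"
    using \<open>j \<in> {1..l}\<close> unfolding Dset_def by auto
  then show "j \<in> \<Union>(last_row_diffs T n l)" unfolding last_row_diffs_def by blast
qed

theorem lemma14:
  fixes T :: "nat \<Rightarrow> nat \<Rightarrow> bool" and n l :: nat
  assumes "\<forall>j\<in>{1..l}. dirty T n j"
    and "delta T n l \<le> 3"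
    and "Tfam T n l 3 \<noteq> {}"
  shows "l \<le> card (Tfam T n l 2) + card (Tfam T n l 3) + 2"
proof -
  let ?F = "last_row_diffs T n l"
  obtain A where A: "A \<in> Tfam T n l 3" using assms(3) by blast
  then have "A \<in> ?F" "card A = 3" by (simp_all add: Tfam_eq_card_last_row_diffs)
  have card_le: "\<forall>B\<in>?F. card B \<le> 3"
    using card_last_row_diffs_le_delta assms(2) le_trans by blast
  have close: "\<forall>B\<in>?F. card (sym_diff A B) \<le> 3"
    using card_sym_diff_last_row_diffs_le_delta[OF \<open>A \<in> ?F\<close>] assms(2) le_trans by blast
  have "l = card {1..l}" by simp
  also have "\<dots> \<le> card (\<Union>?F)"
    using finite_last_row_diffs finite_mem_last_row_diffs
    by (intro card_mono dirty_columns_subset_Union_last_row_diffs[OF assms(1)] finite_Union)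
  also have "\<dots> \<le> 3 + card (Tfam T n l 2 \<union> Tfam T n l 3 - {A})"
    using card_Union_le_if_close_to_member[of ?F A] finite_last_row_diffs finite_mem_last_row_diffs
      \<open>A \<in> ?F\<close> \<open>card A = 3\<close> card_le close
    by (simp add: large_last_row_diffs_eq_Tfam)
  also have "\<dots> = card (Tfam T n l 2) + card (Tfam T n l 3) + 2"
    using A assms(3) card_gt_0_iff[of "Tfam T n l 3"] finite_Tfam[of T n l 3] card_Un_Tfam[of 2 3 T n l]
    by (simp add: card_Diff_singleton)
  finally show ?thesis .
qed

end
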